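(* Let $(x_k)$ be a bounded sequence in a real Banach space $X$, let $x\in X$ and $c>0$, and suppose that $(x_k-x)$ generates an $\ell_1$-spreading model with constant $c$. Then $\widetilde{\operatorname{cca}}(x_{k^3})\ge 2c$, where $(x_{k^3})_{k\ge1}$ is the subsequence $x_1,x_8,x_{27},\dots$.
   Context: A bounded sequence $(y_k)$ generates an $\ell_1$-spreading model with constant $\delta>0$ if $\|\sum_{i\in F}\alpha_i y_i\|\ge\delta\sum_{i\in F}|\alpha_i|$ for every finite $F\subset\mathbb N$ with $\#F\le\min F$ and all real scalars $(\alpha_i)_{i\in F}$. $\operatorname{ca}(y_k)=\inf_{n}\sup\{\|y_k-y_l\|: k,l\ge n\}$, $\operatorname{cca}(y_k)=\operatorname{ca}(\frac1k\sum_{i=1}^k y_i)$, $\widetilde{\operatorname{cca}}(y_k)=\inf\{\operatorname{cca}(y_{k_n}) : (y_{k_n})\text{ a subsequence of }(y_k)\}$. *)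

theory Defs
  imports "HOL-Analysis.Analysis"
begin

text \<open>Sequences are functions nat => 'a; following the paper, indices start at 1
  and the value at index 0 is ignored by all definitions below.\<close>

definition ell1_spreading_model :: "(nat \<Rightarrow> 'a::real_normed_vector) \<Rightarrow> real \<Rightarrow> bool" where
  "ell1_spreading_model y \<delta> \<longleftrightarrow> \<delta> > 0 \<and> bounded (y ` {1..}) \<and>
     (\<forall>F \<alpha>. finite F \<and> F \<subseteq> {1..} \<and> F \<noteq> {} \<and> card F \<le> Min F \<longrightarrow>
        norm (\<Sum>i\<in>F. \<alpha> i *\<^sub>R y i) \<ge> \<delta> * (\<Sum>i\<in>F. \<bar>\<alpha> i\<bar>))"

definition ca :: "(nat \<Rightarrow> 'a::real_normed_vector) \<Rightarrow> real" where
  "ca y = (INF n\<in>{1..}. SUP kl\<in>{n..} \<times> {n..}. norm (y (fst kl) - y (snd kl)))"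

definition cca :: "(nat \<Rightarrow> 'a::real_normed_vector) \<Rightarrow> real" where
  "cca y = ca (\<lambda>k. (1 / real k) *\<^sub>R (\<Sum>i\<in>{1..k}. y i))"

text \<open>Subsequences (y_{k_n})_{n>=1} with 1 <= k_1 < k_2 < ... are exactly
  n |-> y (r n) for strict_mono r (the value r 0 is irrelevant).\<close>
definition cca_tilde :: "(nat \<Rightarrow> 'a::real_normed_vector) \<Rightarrow> real" where
  "cca_tilde y = (INF r\<in>{r::nat\<Rightarrow>nat. strict_mono r}. cca (y \<circ> r))"

end

theory Submission
  imports Defs
begin

text \<open>Fix a subsequence \<open>r\<close> and compare the Cesaro means of \<open>z = x \<circ> (\<lambda>k. r k ^ 3)\<close> at
  \<open>k = p\<^sup>2\<close> and \<open>l = p\<^sup>3\<close>. As the weights \<open>\<beta>\<^sub>i = [i \<le> k]/k - 1/l\<close> sum to zero, their difference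
  is the sum of \<open>\<beta>\<^sub>i (z\<^sub>i - x\<^sub>0)\<close> over \<open>1 \<le> i \<le> l\<close>, and \<open>\<Sum>|\<beta>\<^sub>i| = 2 - 2/p\<close>. The \<open>p - 1\<close> terms with \<open>i < p\<close> have
  total weight at most \<open>1/p\<close>; the remaining at most \<open>p\<^sup>3\<close> terms sit at indices
  \<open>r(i)\<^sup>3 \<ge> p\<^sup>3\<close>, so the spreading model bounds their norm below by \<open>c\<close> times their
  weight. Hence \<open>\<parallel>mean\<^sub>k - mean\<^sub>l\<parallel> \<ge> 2c - O(1/p)\<close>, and letting \<open>p \<rightarrow> \<infinity>\<close> gives
  \<open>cca \<ge> 2c\<close> for every subsequence.\<close>

definition cesaro_mean :: "(nat \<Rightarrow> 'a::real_normed_vector) \<Rightarrow> nat \<Rightarrow> 'a" where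
  "cesaro_mean y k = (1 / real k) *\<^sub>R (\<Sum>i\<in>{1..k}. y i)"

definition mean_diff_weight :: "nat \<Rightarrow> nat \<Rightarrow> nat \<Rightarrow> real" where
  "mean_diff_weight k l i = (if i \<le> k then 1 / real k else 0) - 1 / real l"

lemma cca_eq_ca_cesaro_mean: "cca y = ca (cesaro_mean y)"
  by (simp add: cca_def cesaro_mean_def[abs_def])

lemma ca_geI:
  fixes a :: "nat \<Rightarrow> 'a::real_normed_vector"
  assumes "bounded (range a)"
    and far: "\<And>n e. 0 < e \<Longrightarrow> \<exists>k\<ge>n. \<exists>l\<ge>n. d - e \<le> norm (a k - a l)"
  shows "d \<le> ca a"
  unfolding ca_def
proof (rule cINF_greatest)
  show "{1::nat..} \<noteq> {}" by auto
  obtain B where B: "\<And>i. norm (a i) \<le> B" using assms(1) by (auto simp: bounded_iff)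
  fix n :: nat
  have bdd: "bdd_above ((\<lambda>kl. norm (a (fst kl) - a (snd kl))) ` ({n..} \<times> {n..}))"
    by (rule bdd_aboveI2[where M = "2 * B"])
      (smt (verit) B norm_triangle_ineq4)
  show "d \<le> (SUP kl\<in>{n..} \<times> {n..}. norm (a (fst kl) - a (snd kl)))"
  proof (rule field_le_epsilon)
    fix e :: real assume "0 < e"
    then obtain k l where "k \<ge> n" "l \<ge> n" "d - e \<le> norm (a k - a l)" using far by blast
    moreover have "norm (a k - a l) \<le> (SUP kl\<in>{n..} \<times> {n..}. norm (a (fst kl) - a (snd kl)))"
      using cSUP_upper[OF _ bdd, of "(k, l)"] \<open>k \<ge> n\<close> \<open>l \<ge> n\<close> by simp
    ultimately show "d \<le> (SUP kl\<in>{n..} \<times> {n..}. norm (a (fst kl) - a (snd kl))) + e" by linarith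
  qed
qed

lemma norm_cesaro_mean_le:
  assumes "\<And>i. norm (z i) \<le> B"
  shows "norm (cesaro_mean z k) \<le> B"
proof (cases "k = 0")
  case True
  then show ?thesis using order_trans[OF norm_ge_zero assms] by (simp add: cesaro_mean_def)
next
  case False
  have "norm (\<Sum>i\<in>{1..k}. z i) \<le> real k * B"
    using norm_sum[of z "{1..k}"] sum_mono[of "{1..k}" "\<lambda>i. norm (z i)" "\<lambda>_. B"] assms by simp
  with False show ?thesis by (simp add: cesaro_mean_def divide_le_eq mult.commute)
qed

lemma bounded_range_cesaro_mean:
  assumes "bounded (range z)"
  shows "bounded (range (cesaro_mean z))"
proof -
  obtain B where "\<And>i. norm (z i) \<le> B" using assms by (auto simp: bounded_iff)
  then show ?thesis by (auto simp: bounded_iff intro: norm_cesaro_mean_le)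
qed

lemma sum_atLeastAtMost_if_le:
  fixes k l :: nat
  assumes "k \<le> l"
  shows "(\<Sum>i\<in>{1..l}. if i \<le> k then f i else 0) = (\<Sum>i\<in>{1..k}. f i)"
proof -
  have "{i \<in> {1..l}. i \<le> k} = {1..k}" using assms by auto
  then show ?thesis by (simp flip: sum.inter_filter)
qed

lemma cesaro_mean_diff_eq:
  assumes "1 \<le> k" "k \<le> l"
  shows "cesaro_mean z k - cesaro_mean z l
    = (\<Sum>i\<in>{1..l}. mean_diff_weight k l i *\<^sub>R (z i - x0))"
proof -
  have weights_sum_zero: "(\<Sum>i\<in>{1..l}. mean_diff_weight k l i) = 0"
    unfolding mean_diff_weight_def sum_subtractf sum_atLeastAtMost_if_le[OF assms(2)]
    using assms by simp
  have "(\<Sum>i\<in>{1..l}. mean_diff_weight k l i *\<^sub>R (z i - x0))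
      = (\<Sum>i\<in>{1..l}. mean_diff_weight k l i *\<^sub>R z i)"
    unfolding scaleR_diff_right sum_subtractf scaleR_sum_left[symmetric] weights_sum_zero by simp
  also have "\<dots> = (\<Sum>i\<in>{1..l}. if i \<le> k then (1 / real k) *\<^sub>R z i else 0)
      - (\<Sum>i\<in>{1..l}. (1 / real l) *\<^sub>R z i)"
    unfolding mean_diff_weight_def scaleR_diff_left sum_subtractf by (auto intro!: sum.cong)
  also have "\<dots> = cesaro_mean z k - cesaro_mean z l"
    unfolding sum_atLeastAtMost_if_le[OF assms(2)] by (simp add: cesaro_mean_def scaleR_sum_right)
  finally show ?thesis ..
qed

lemma abs_mean_diff_weight_le:
  assumes "1 \<le> k" "k \<le> l"
  shows "\<bar>mean_diff_weight k l i\<bar> \<le> 1 / real k"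
  using assms frac_le[of 1 1 "real k" "real l"] by (auto simp: mean_diff_weight_def)

lemma sum_abs_mean_diff_weight:
  assumes "1 \<le> k" "k \<le> l"
  shows "(\<Sum>i\<in>{1..l}. \<bar>mean_diff_weight k l i\<bar>) = 2 - 2 * real k / real l"
proof -
  have "1 / real l \<le> 1 / real k" using assms by (simp add: frac_le)
  then have "(\<Sum>i\<in>{1..l}. \<bar>mean_diff_weight k l i\<bar>)
      = (\<Sum>i\<in>{1..l}. (if i \<le> k then 1 / real k - 2 / real l else 0) + 1 / real l)"
    by (intro sum.cong) (auto simp: mean_diff_weight_def)
  also have "\<dots> = real k * (1 / real k - 2 / real l) + 1"
    unfolding sum.distrib sum_atLeastAtMost_if_le[OF assms(2)] using assms by simp
  also have "\<dots> = 2 - 2 * real k / real l"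
    using assms by (simp add: field_simps)
  finally show ?thesis .
qed

lemma ell1_spreading_model_image:
  fixes y :: "nat \<Rightarrow> 'a::real_normed_vector"
  assumes sp: "ell1_spreading_model y c" and "finite I" "I \<noteq> {}" and inj: "inj_on g I"
    and spread: "\<And>i. i \<in> I \<Longrightarrow> card I \<le> g i"
  shows "c * (\<Sum>i\<in>I. \<bar>\<beta> i\<bar>) \<le> norm (\<Sum>i\<in>I. \<beta> i *\<^sub>R y (g i))"
proof -
  define \<alpha> where "\<alpha> = \<beta> \<circ> inv_into I g"
  have card_image: "card (g ` I) = card I" using inj by (rule card_image)
  have "Min (g ` I) \<in> g ` I" using assms(2,3) by simp
  then have "card (g ` I) \<le> Min (g ` I)" using spread card_image by auto
  moreover have "g ` I \<subseteq> {1..}"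
    using spread assms(2,3) by (fastforce simp: card_gt_0_iff Suc_le_eq)
  ultimately have "c * (\<Sum>j\<in>g ` I. \<bar>\<alpha> j\<bar>) \<le> norm (\<Sum>j\<in>g ` I. \<alpha> j *\<^sub>R y j)"
    using sp assms(2,3) unfolding ell1_spreading_model_def by blast
  then show ?thesis using inj by (simp add: sum.reindex \<alpha>_def)
qed

lemma sum_atLeastAtMost_split:
  fixes f :: "nat \<Rightarrow> 'b::comm_monoid_add"
  assumes "1 \<le> m" "m \<le> l"
  shows "(\<Sum>i\<in>{1..l}. f i) = (\<Sum>i\<in>{1..<m}. f i) + (\<Sum>i\<in>{m..l}. f i)"
proof -
  have "{1..l} = {1..<m} \<union> {m..l}" using assms by auto
  then show ?thesis by (metis finite_atLeastAtMost finite_atLeastLessThan ivl_disj_int_two(7) sum.union_disjoint)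
qed

lemma norm_sum_scaleR_le:
  assumes "\<And>i. i \<in> A \<Longrightarrow> norm (v i) \<le> M"
  shows "norm (\<Sum>i\<in>A. \<beta> i *\<^sub>R v i) \<le> M * (\<Sum>i\<in>A. \<bar>\<beta> i\<bar>)"
proof -
  have "norm (\<Sum>i\<in>A. \<beta> i *\<^sub>R v i) \<le> (\<Sum>i\<in>A. \<bar>\<beta> i\<bar> * norm (v i))"
    by (rule order_trans[OF norm_sum]) simp
  also have "\<dots> \<le> (\<Sum>i\<in>A. \<bar>\<beta> i\<bar> * M)"
    by (intro sum_mono mult_left_mono assms) simp_all
  finally show ?thesis by (simp add: sum_distrib_left mult.commute)
qed

lemma sum_abs_mean_diff_weight_cube_head_le:
  assumes "1 \<le> p"
  shows "(\<Sum>i\<in>{1..<p}. \<bar>mean_diff_weight (p\<^sup>2) (p ^ 3) i\<bar>) \<le> 1 / real p"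
proof -
  have "1 \<le> p\<^sup>2" "p\<^sup>2 \<le> p ^ 3" using assms by (simp_all add: power_increasing)
  then have "(\<Sum>i\<in>{1..<p}. \<bar>mean_diff_weight (p\<^sup>2) (p ^ 3) i\<bar>) \<le> (\<Sum>i\<in>{1..<p}. 1 / real (p\<^sup>2))"
    by (intro sum_mono abs_mean_diff_weight_le)
  also have "\<dots> = real (p - 1) / real (p\<^sup>2)" by simp
  also have "\<dots> \<le> 1 / real p" using assms by (simp add: field_simps power2_eq_square)
  finally show ?thesis .
qed

lemma sum_abs_mean_diff_weight_cube_tail:
  assumes "1 \<le> p"
  shows "(\<Sum>i\<in>{p..p ^ 3}. \<bar>mean_diff_weight (p\<^sup>2) (p ^ 3) i\<bar>)
    = 2 - 2 / real p - (\<Sum>i\<in>{1..<p}. \<bar>mean_diff_weight (p\<^sup>2) (p ^ 3) i\<bar>)"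
proof -
  have "1 \<le> p\<^sup>2" "p\<^sup>2 \<le> p ^ 3" "p \<le> p ^ 3"
    using assms power_increasing[of 1 3 p] by (simp_all add: power_increasing)
  then have "(\<Sum>i\<in>{1..p ^ 3}. \<bar>mean_diff_weight (p\<^sup>2) (p ^ 3) i\<bar>) = 2 - 2 / real p"
    using sum_abs_mean_diff_weight[of "p\<^sup>2" "p ^ 3"] assms
    by (simp add: field_simps power2_eq_square power3_eq_cube)
  then show ?thesis
    unfolding sum_atLeastAtMost_split[OF assms \<open>p \<le> p ^ 3\<close>] by linarith
qed

lemma norm_cesaro_mean_cube_diff_ge:
  fixes y z :: "nat \<Rightarrow> 'a::real_normed_vector"
  assumes sp: "ell1_spreading_model y c" and r: "strict_mono r"
    and M: "\<And>j. norm (y j) \<le> M" and p: "1 \<le> p" and zy: "\<And>i. z i - x0 = y (r i ^ 3)"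
  shows "2 * c - (3 * c + M) / real p \<le> norm (cesaro_mean z (p\<^sup>2) - cesaro_mean z (p ^ 3))"
proof -
  define \<beta> where "\<beta> = mean_diff_weight (p\<^sup>2) (p ^ 3)"
  define head where "head = (\<Sum>i\<in>{1..<p}. \<beta> i *\<^sub>R y (r i ^ 3))"
  define tail where "tail = (\<Sum>i\<in>{p..p ^ 3}. \<beta> i *\<^sub>R y (r i ^ 3))"
  define T where "T = (\<Sum>i\<in>{1..<p}. \<bar>\<beta> i\<bar>)"
  have k: "1 \<le> p\<^sup>2" "p\<^sup>2 \<le> p ^ 3" using p by (simp_all add: power_increasing)
  have "p \<le> p ^ 3" using p power_increasing[of 1 3 p] by simp
  have diff: "cesaro_mean z (p\<^sup>2) - cesaro_mean z (p ^ 3) = head + tail"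
    unfolding cesaro_mean_diff_eq[OF k, of z x0] zy head_def tail_def \<beta>_def
    by (rule sum_atLeastAtMost_split[OF p \<open>p \<le> p ^ 3\<close>])
  have head_le: "norm head \<le> M * T"
    unfolding head_def T_def using M by (rule norm_sum_scaleR_le)
  have T_le: "T \<le> 1 / real p"
    unfolding T_def \<beta>_def using p by (rule sum_abs_mean_diff_weight_cube_head_le)
  have tail_ge: "c * (2 - 2 / real p - T) \<le> norm tail"
  proof -
    have "card {p..p ^ 3} \<le> r i ^ 3" if "i \<in> {p..p ^ 3}" for i
    proof -
      have "card {p..p ^ 3} \<le> p ^ 3" using p by simp
      also have "\<dots> \<le> r i ^ 3" using that seq_suble[OF r, of i] by (simp add: power_mono)
      finally show ?thesis .
    qed
    moreover have "inj_on (\<lambda>i. r i ^ 3) {p..p ^ 3}"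
      using strict_mono_imp_inj_on[OF r] by (auto simp: inj_on_def power_eq_iff_eq_base)
    ultimately show ?thesis
      using ell1_spreading_model_image[OF sp, of "{p..p ^ 3}" "\<lambda>i. r i ^ 3" \<beta>] \<open>p \<le> p ^ 3\<close>
        sum_abs_mean_diff_weight_cube_tail[OF p]
      by (simp add: tail_def T_def \<beta>_def)
  qed
  have "0 < c" "0 \<le> M"
    using sp order_trans[OF norm_ge_zero M] by (auto simp: ell1_spreading_model_def)
  with T_le have "(c + M) * T \<le> (c + M) / real p"
    by (metis add_nonneg_nonneg less_imp_le mult_left_mono times_divide_eq_right mult_1_right)
  moreover have "(3 * c + M) / real p = 2 * c / real p + (c + M) / real p"
    by (simp add: add_divide_distrib[symmetric])
  ultimately have "2 * c - (3 * c + M) / real p \<le> norm tail - norm head"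
    using head_le tail_ge by (simp add: algebra_simps)
  also have "\<dots> \<le> norm (head + tail)"
    using norm_diff_ineq[of tail head] by (simp add: add.commute)
  finally show ?thesis unfolding diff .
qed

lemma cesaro_mean_cube_far_apart:
  fixes y z :: "nat \<Rightarrow> 'a::real_normed_vector"
  assumes sp: "ell1_spreading_model y c" and r: "strict_mono r"
    and M: "\<And>j. norm (y j) \<le> M" and zy: "\<And>i. z i - x0 = y (r i ^ 3)" and "0 < e"
  shows "\<exists>k\<ge>n. \<exists>l\<ge>n. 2 * c - e \<le> norm (cesaro_mean z k - cesaro_mean z l)"
proof -
  obtain q :: nat where "(3 * c + M) / e < real q" using reals_Archimedean2 by blast
  define p where "p = max q (max 1 n)"
  have "(3 * c + M) / e < real p"
    using \<open>(3 * c + M) / e < real q\<close> by (simp add: p_def)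
  then have "(3 * c + M) / real p < e"
    using \<open>0 < e\<close> by (simp add: p_def pos_divide_less_eq mult.commute)
  moreover have "1 \<le> p" "n \<le> p\<^sup>2" "n \<le> p ^ 3"
    using power_increasing[of 1 2 p] power_increasing[of 1 3 p] by (auto simp: p_def)
  ultimately show ?thesis
    using norm_cesaro_mean_cube_diff_ge[OF sp r M _ zy, of p] by fastforce
qed

theorem lemma4p5:
  fixes x :: "nat \<Rightarrow> 'a::banach" and x0 :: 'a and c :: real
  assumes "bounded (range x)"
    and "c > 0"
    and "ell1_spreading_model (\<lambda>k. x k - x0) c"
  shows "cca_tilde (\<lambda>k. x (k ^ 3)) \<ge> 2 * c"
  unfolding cca_tilde_def
proof (rule cINF_greatest)
  show "{r::nat \<Rightarrow> nat. strict_mono r} \<noteq> {}" using strict_mono_id by blast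
  obtain B where B: "\<And>j. norm (x j) \<le> B" using assms(1) by (auto simp: bounded_iff)
  have M: "norm (x j - x0) \<le> B + norm x0" for j
    using B[of j] norm_triangle_ineq4[of "x j" x0] by simp
  fix r :: "nat \<Rightarrow> nat" assume "r \<in> {r. strict_mono r}"
  then have r: "strict_mono r" by simp
  define z where "z = (\<lambda>k. x (k ^ 3)) \<circ> r"
  have "bounded (range z)" using assms(1) by (rule bounded_subset) (auto simp: z_def)
  moreover have "\<exists>k\<ge>n. \<exists>l\<ge>n. 2 * c - e \<le> norm (cesaro_mean z k - cesaro_mean z l)"
    if "0 < e" for n e
    using cesaro_mean_cube_far_apart[OF assms(3) r M _ that] by (simp add: z_def)
  ultimately show "2 * c \<le> cca ((\<lambda>k. x (k ^ 3)) \<circ> r)"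
    unfolding cca_eq_ca_cesaro_mean z_def[symmetric] by (intro ca_geI bounded_range_cesaro_mean)
qed

end
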